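(* Let $G$ be a topological groupoid such that $G^{(0)}$ is locally compact. Consider the assertions: (i) $G$ is proper; (ii) $(r,s)\colon G\to G^{(0)}\times G^{(0)}$ is closed and $G_x^x$ is quasi-compact for every $x\in G^{(0)}$; (iii) for all quasi-compact subspaces $K,L$ of $G^{(0)}$, $G_K^L$ is quasi-compact; (iii)' for all compact subspaces $K,L$ of $G^{(0)}$, $G_K^L$ is quasi-compact; (iv) for every quasi-compact subspace $K$ of $G^{(0)}$, $G_K^K$ is quasi-compact; (v) for all $x,y\in G^{(0)}$ there exist compact neighbourhoods $K_x$ of $x$ and $L_y$ of $y$ such that $G_{K_x}^{L_y}$ is quasi-compact. Then (i)$\iff$(ii)$\iff$(iii)$\iff$(iii)'$\iff$(v)$\implies$(iv). If $G^{(0)}$ is Hausdorff, then (i)–(v) are all equivalent.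
   Context: Quasi-compact: every open cover has a finite subcover; compact: quasi-compact and Hausdorff; locally compact: every point has a compact neighbourhood (not necessarily Hausdorff). A continuous map is proper if it is closed and has quasi-compact fibres. $G$ is proper if $(r,s)\colon G\to G^{(0)}\times G^{(0)}$ is proper. $G_K^L=r^{-1}(L)\cap s^{-1}(K)$, $G_x^x=G_{\{x\}}^{\{x\}}$. *)

theory Defs
  imports "HOL-Analysis.Analysis"
begin

text \<open>A topological groupoid: arrow space G, unit space X, range/source maps r s,
unit inclusion u, inverse ginv and multiplication gmult (defined on composable pairs,
i.e. s g = r h).  Quasi-compactness is the library notion compactin (no separation).\<close>

definition composable_pairs :: "'a topology \<Rightarrow> ('a \<Rightarrow> 'b) \<Rightarrow> ('a \<Rightarrow> 'b) \<Rightarrow> ('a \<times> 'a) set" where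
  "composable_pairs G r s = {(g, h). g \<in> topspace G \<and> h \<in> topspace G \<and> s g = r h}"

definition topological_groupoid ::
  "'a topology \<Rightarrow> 'b topology \<Rightarrow> ('a \<Rightarrow> 'b) \<Rightarrow> ('a \<Rightarrow> 'b) \<Rightarrow> ('b \<Rightarrow> 'a)
   \<Rightarrow> ('a \<Rightarrow> 'a) \<Rightarrow> ('a \<Rightarrow> 'a \<Rightarrow> 'a) \<Rightarrow> bool" where
  "topological_groupoid G X r s u ginv gmult \<longleftrightarrow>
     (\<forall>x\<in>topspace X. u x \<in> topspace G \<and> r (u x) = x \<and> s (u x) = x) \<and>
     (\<forall>g\<in>topspace G. r g \<in> topspace X \<and> s g \<in> topspace X) \<and>
     (\<forall>g\<in>topspace G. \<forall>h\<in>topspace G. s g = r h \<longrightarrow>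
        gmult g h \<in> topspace G \<and> r (gmult g h) = r g \<and> s (gmult g h) = s h) \<and>
     (\<forall>g\<in>topspace G. \<forall>h\<in>topspace G. \<forall>k\<in>topspace G. s g = r h \<longrightarrow> s h = r k \<longrightarrow>
        gmult (gmult g h) k = gmult g (gmult h k)) \<and>
     (\<forall>g\<in>topspace G. gmult (u (r g)) g = g \<and> gmult g (u (s g)) = g) \<and>
     (\<forall>g\<in>topspace G. ginv g \<in> topspace G \<and> r (ginv g) = s g \<and> s (ginv g) = r g \<and>
        gmult g (ginv g) = u (r g) \<and> gmult (ginv g) g = u (s g)) \<and>
     continuous_map G X r \<and> continuous_map G X s \<and> continuous_map X G u \<and>
     continuous_map G G ginv \<and>
     continuous_map (subtopology (prod_topology G G) (composable_pairs G r s)) G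
        (\<lambda>(g, h). gmult g h)"

definition compact_sub :: "'b topology \<Rightarrow> 'b set \<Rightarrow> bool" where
  "compact_sub X K \<longleftrightarrow> compactin X K \<and> Hausdorff_space (subtopology X K)"

definition nbhd :: "'b topology \<Rightarrow> 'b set \<Rightarrow> 'b \<Rightarrow> bool" where
  "nbhd X N x \<longleftrightarrow> N \<subseteq> topspace X \<and> (\<exists>U. openin X U \<and> x \<in> U \<and> U \<subseteq> N)"

definition loc_compact :: "'b topology \<Rightarrow> bool" where
  "loc_compact X \<longleftrightarrow> (\<forall>x\<in>topspace X. \<exists>K. compact_sub X K \<and> nbhd X K x)"

definition arrows_between :: "'a topology \<Rightarrow> ('a \<Rightarrow> 'b) \<Rightarrow> ('a \<Rightarrow> 'b) \<Rightarrow> 'b set \<Rightarrow> 'b set \<Rightarrow> 'a set" where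
  "arrows_between G r s K L = {g \<in> topspace G. r g \<in> L \<and> s g \<in> K}"

end

theory Submission
  imports Defs
begin

text \<open>
  The anchor map \<open>(r, s)\<close> is proper as soon as every point of \<open>X \<times> X\<close> has a neighbourhood
  \<open>L \<times> K\<close> with \<open>L\<close>, \<open>K\<close> Hausdorff subspaces and \<open>G\<^sub>K\<^sup>L\<close> quasi-compact: over such a neighbourhood
  \<open>(r, s)\<close> maps a quasi-compact space into a Hausdorff one, hence is closed with quasi-compact
  fibres, and both properties are local on the target.  Local compactness of \<open>X\<close> provides such
  neighbourhoods under (iii)', and a proper map pulls quasi-compact rectangles back to
  quasi-compact sets.  The fibre of \<open>(r, s)\<close> over \<open>(y, x)\<close> is the translate \<open>g G\<^sub>x\<^sup>x\<close> of the
  isotropy group by any arrow \<open>g : x \<rightarrow> y\<close>, so a closed anchor map with quasi-compact isotropy is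
  proper.  If \<open>X\<close> is Hausdorff, \<open>G\<^sub>K\<^sup>L\<close> is a closed subset of \<open>G\<^sub>K\<^sub>\<union>\<^sub>L\<^sup>K\<^sup>\<union>\<^sup>L\<close>, which gives (iv) \<open>\<Longrightarrow>\<close> (iii).
\<close>

lemma compactin_Hausdorff_subtopology_imp_closedin_Int:
  assumes "compactin Y Z" "Z \<subseteq> N" "Hausdorff_space (subtopology Y N)"
  obtains T where "closedin Y T" "Z = T \<inter> N"
proof -
  have "closedin (subtopology Y N) Z"
    using assms compactin_imp_closedin[OF assms(3)] by (simp add: compactin_subtopology)
  then show thesis
    using that by (auto simp: closedin_subtopology)
qed

lemma closedin_if_compact_traces_on_Hausdorff_neighbourhoods:
  assumes S: "S \<subseteq> topspace Y"
    and loc: "\<And>y. y \<in> topspace Y \<Longrightarrow> y \<notin> S \<Longrightarrow> \<exists>U N. openin Y U \<and> y \<in> U \<and> U \<subseteq> N \<and>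
                  Hausdorff_space (subtopology Y N) \<and> compactin Y (S \<inter> N)"
  shows "closedin Y S"
proof -
  have "openin Y (topspace Y - S)"
  proof (subst openin_subopen, intro ballI)
    fix y assume y: "y \<in> topspace Y - S"
    then have "y \<in> topspace Y" "y \<notin> S"
      by blast+
    then obtain U N where U: "openin Y U" "y \<in> U" "U \<subseteq> N"
      and N: "Hausdorff_space (subtopology Y N)" "compactin Y (S \<inter> N)"
      using loc by blast
    then obtain T where T: "closedin Y T" "S \<inter> N = T \<inter> N"
      using compactin_Hausdorff_subtopology_imp_closedin_Int[of Y "S \<inter> N" N] by blast
    have S_eq_T: "z \<in> S \<longleftrightarrow> z \<in> T" if "z \<in> U" for z
      using T(2) U(3) that by (metis Int_iff subsetD)
    have "openin Y (U - T)"
      using U(1) T(1) by (rule openin_diff)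
    moreover have "y \<in> U - T"
      using U(2) y S_eq_T by simp
    moreover have "U - T \<subseteq> topspace Y - S"
      using openin_subset[OF U(1)] S_eq_T by auto
    ultimately show "\<exists>V. openin Y V \<and> y \<in> V \<and> V \<subseteq> topspace Y - S"
      by blast
  qed
  then show ?thesis
    using S by (simp add: closedin_def)
qed

lemma proper_map_if_compact_preimages_of_Hausdorff_neighbourhoods:
  assumes f: "continuous_map X Y f"
    and loc: "\<And>y. y \<in> topspace Y \<Longrightarrow> \<exists>U N. openin Y U \<and> y \<in> U \<and> U \<subseteq> N \<and>
                  Hausdorff_space (subtopology Y N) \<and> compactin X {x \<in> topspace X. f x \<in> N}"
  shows "proper_map X Y f"
  unfolding proper_map_def closed_map_def
proof (intro conjI allI impI ballI)
  fix C assume C: "closedin X C"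
  show "closedin Y (f ` C)"
  proof (rule closedin_if_compact_traces_on_Hausdorff_neighbourhoods)
    show "f ` C \<subseteq> topspace Y"
      using closedin_subset[OF C] continuous_map_image_subset_topspace[OF f]
      by (meson image_mono subset_trans)
  next
    fix y assume "y \<in> topspace Y"
    then obtain U N where U: "openin Y U" "y \<in> U" "U \<subseteq> N"
      and N: "Hausdorff_space (subtopology Y N)" "compactin X {x \<in> topspace X. f x \<in> N}"
      using loc by blast
    have "compactin X (C \<inter> {x \<in> topspace X. f x \<in> N})"
      using C N(2) closed_Int_compactin by blast
    then have "compactin Y (f ` (C \<inter> {x \<in> topspace X. f x \<in> N}))"
      using f by (rule image_compactin)
    moreover have "f ` (C \<inter> {x \<in> topspace X. f x \<in> N}) = f ` C \<inter> N"
      using closedin_subset[OF C] by auto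
    ultimately have "compactin Y (f ` C \<inter> N)"
      by simp
    with U N(1) show "\<exists>U N. openin Y U \<and> y \<in> U \<and> U \<subseteq> N \<and>
        Hausdorff_space (subtopology Y N) \<and> compactin Y (f ` C \<inter> N)"
      by blast
  qed
next
  fix y assume y: "y \<in> topspace Y"
  obtain U N where U: "y \<in> U" "U \<subseteq> N"
    and N: "Hausdorff_space (subtopology Y N)" "compactin X {x \<in> topspace X. f x \<in> N}"
    using loc[OF y] by auto
  moreover have "compactin Y {y}"
    using y by simp
  ultimately obtain T where T: "closedin Y T" "{y} = T \<inter> N"
    using compactin_Hausdorff_subtopology_imp_closedin_Int[of Y "{y}" N] by blast
  have "compactin X ({x \<in> topspace X. f x \<in> T} \<inter> {x \<in> topspace X. f x \<in> N})"
    using closedin_continuous_map_preimage[OF f T(1)] N(2) closed_Int_compactin by blast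
  moreover have "{x \<in> topspace X. f x \<in> T} \<inter> {x \<in> topspace X. f x \<in> N} = {x \<in> topspace X. f x = y}"
    using T(2) U by (auto simp: set_eq_iff)
  ultimately show "compactin X {x \<in> topspace X. f x = y}"
    by simp
qed

lemma arrows_between_eq_preimage:
  "arrows_between G r s K L = {g \<in> topspace G. (r g, s g) \<in> L \<times> K}"
  by (auto simp: arrows_between_def)

lemma proper_map_imp_compactin_arrows_between:
  assumes "proper_map G (prod_topology X X) (\<lambda>g. (r g, s g))" "compactin X K" "compactin X L"
  shows "compactin G (arrows_between G r s K L)"
  unfolding arrows_between_eq_preimage
  using assms by (intro compactin_proper_map_preimage) (auto simp: compactin_Times)

lemma compactin_arrows_between_closed_subset:
  assumes "continuous_map G X r" "continuous_map G X s"
    and "closedin X K" "closedin X L" "K \<subseteq> K'" "L \<subseteq> L'"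
    and "compactin G (arrows_between G r s K' L')"
  shows "compactin G (arrows_between G r s K L)"
proof -
  have "closedin G ({g \<in> topspace G. r g \<in> L} \<inter> {g \<in> topspace G. s g \<in> K})"
    using assms by (intro closedin_Int closedin_continuous_map_preimage)
  then have "compactin G ({g \<in> topspace G. r g \<in> L} \<inter> {g \<in> topspace G. s g \<in> K}
                           \<inter> arrows_between G r s K' L')"
    using assms(7) by (rule closed_Int_compactin)
  moreover have "{g \<in> topspace G. r g \<in> L} \<inter> {g \<in> topspace G. s g \<in> K}
                   \<inter> arrows_between G r s K' L' = arrows_between G r s K L"
    using assms(5,6) by (auto simp: arrows_between_def)
  ultimately show ?thesis
    by simp
qed

lemma compactin_arrows_between_if_compactin_union_square:
  assumes "Hausdorff_space X" "continuous_map G X r" "continuous_map G X s"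
    and "compactin X K" "compactin X L"
    and "compactin G (arrows_between G r s (K \<union> L) (K \<union> L))"
  shows "compactin G (arrows_between G r s K L)"
  using assms compactin_imp_closedin[OF assms(1)]
  by (intro compactin_arrows_between_closed_subset[of G X r s K L "K \<union> L" "K \<union> L"]) auto

lemma proper_map_if_compact_arrows_between_Hausdorff_neighbourhoods:
  assumes "continuous_map G X r" "continuous_map G X s"
    and loc: "\<And>x y. x \<in> topspace X \<Longrightarrow> y \<in> topspace X \<Longrightarrow> \<exists>K L.
               nbhd X K x \<and> nbhd X L y \<and> Hausdorff_space (subtopology X K) \<and>
               Hausdorff_space (subtopology X L) \<and> compactin G (arrows_between G r s K L)"
  shows "proper_map G (prod_topology X X) (\<lambda>g. (r g, s g))"
proof (rule proper_map_if_compact_preimages_of_Hausdorff_neighbourhoods)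
  show "continuous_map G (prod_topology X X) (\<lambda>g. (r g, s g))"
    using assms by (simp add: continuous_map_pairedI)
next
  fix p assume "p \<in> topspace (prod_topology X X)"
  then obtain y x where p: "p = (y, x)" "x \<in> topspace X" "y \<in> topspace X"
    by auto
  then obtain K L where KL: "nbhd X K x" "nbhd X L y" "Hausdorff_space (subtopology X K)"
      "Hausdorff_space (subtopology X L)" "compactin G (arrows_between G r s K L)"
    using loc by blast
  then obtain V U where "openin X V" "x \<in> V" "V \<subseteq> K" "openin X U" "y \<in> U" "U \<subseteq> L"
    by (meson nbhd_def)
  then have "openin (prod_topology X X) (U \<times> V)" "p \<in> U \<times> V" "U \<times> V \<subseteq> L \<times> K"
    using p by (auto simp: openin_prod_Times_iff)
  moreover have "Hausdorff_space (subtopology (prod_topology X X) (L \<times> K))"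
    using KL by (simp add: subtopology_Times Hausdorff_space_prod_topology)
  ultimately show "\<exists>U N. openin (prod_topology X X) U \<and> p \<in> U \<and> U \<subseteq> N \<and>
      Hausdorff_space (subtopology (prod_topology X X) N) \<and>
      compactin G {g \<in> topspace G. (r g, s g) \<in> N}"
    using KL(5) unfolding arrows_between_eq_preimage by blast
qed

lemma topological_groupoid_continuous_range:
  "topological_groupoid G X r s u ginv gmult \<Longrightarrow> continuous_map G X r"
  by (simp add: topological_groupoid_def)

lemma topological_groupoid_continuous_source:
  "topological_groupoid G X r s u ginv gmult \<Longrightarrow> continuous_map G X s"
  by (simp add: topological_groupoid_def)

lemma topological_groupoid_mult:
  assumes "topological_groupoid G X r s u ginv gmult" "g \<in> topspace G" "h \<in> topspace G" "s g = r h"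
  shows "gmult g h \<in> topspace G" "r (gmult g h) = r g" "s (gmult g h) = s h"
  using assms by (simp_all add: topological_groupoid_def)

lemma topological_groupoid_assoc:
  assumes "topological_groupoid G X r s u ginv gmult" "g \<in> topspace G" "h \<in> topspace G"
    "k \<in> topspace G" "s g = r h" "s h = r k"
  shows "gmult (gmult g h) k = gmult g (gmult h k)"
  using assms by (simp add: topological_groupoid_def)

lemma topological_groupoid_left_unit:
  assumes "topological_groupoid G X r s u ginv gmult" "g \<in> topspace G"
  shows "gmult (u (r g)) g = g"
  using assms by (simp add: topological_groupoid_def)

lemma topological_groupoid_inverse:
  assumes "topological_groupoid G X r s u ginv gmult" "g \<in> topspace G"
  shows "ginv g \<in> topspace G" "r (ginv g) = s g" "s (ginv g) = r g" "gmult g (ginv g) = u (r g)"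
  using assms by (simp_all add: topological_groupoid_def)

lemma topological_groupoid_continuous_left_translation:
  assumes grpd: "topological_groupoid G X r s u ginv gmult" and g: "g \<in> topspace G"
  shows "continuous_map (subtopology G {h \<in> topspace G. r h = s g}) G (gmult g)"
proof -
  let ?H = "subtopology G {h \<in> topspace G. r h = s g}"
  have "continuous_map ?H (subtopology (prod_topology G G) (composable_pairs G r s)) (\<lambda>h. (g, h))"
    using g by (auto simp: composable_pairs_def continuous_map_in_subtopology
        intro!: continuous_map_pairedI continuous_map_from_subtopology)
  moreover have "continuous_map (subtopology (prod_topology G G) (composable_pairs G r s)) G
                   (\<lambda>(g, h). gmult g h)"
    using grpd by (simp add: topological_groupoid_def)
  ultimately show ?thesis
    using continuous_map_compose by (fastforce simp: o_def)
qed

lemma topological_groupoid_left_translate_isotropy: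
  assumes grpd: "topological_groupoid G X r s u ginv gmult"
    and g: "g \<in> topspace G" "s g = x" "r g = y"
  shows "gmult g ` arrows_between G r s {x} {x} = arrows_between G r s {x} {y}"
proof
  show "gmult g ` arrows_between G r s {x} {x} \<subseteq> arrows_between G r s {x} {y}"
    using topological_groupoid_mult[OF grpd g(1)] g by (auto simp: arrows_between_def)
next
  show "arrows_between G r s {x} {y} \<subseteq> gmult g ` arrows_between G r s {x} {x}"
  proof
    fix h assume "h \<in> arrows_between G r s {x} {y}"
    then have h: "h \<in> topspace G" "r h = y" "s h = x"
      by (auto simp: arrows_between_def)
    note g' = topological_groupoid_inverse[OF grpd g(1)]
    have "gmult (ginv g) h \<in> arrows_between G r s {x} {x}"
      using topological_groupoid_mult[OF grpd g'(1) h(1)] g g'(2,3) h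
      by (simp add: arrows_between_def)
    moreover have "gmult g (gmult (ginv g) h) = h"
    proof -
      have "gmult g (gmult (ginv g) h) = gmult (gmult g (ginv g)) h"
        using topological_groupoid_assoc[OF grpd g(1) g'(1) h(1)] g g'(2,3) h(2) by simp
      also have "\<dots> = h"
        using topological_groupoid_left_unit[OF grpd h(1)] g g'(4) h(2) by simp
      finally show ?thesis .
    qed
    ultimately show "h \<in> gmult g ` arrows_between G r s {x} {x}"
      by (metis image_eqI)
  qed
qed

lemma topological_groupoid_compactin_arrows_between_if_compactin_isotropy:
  assumes grpd: "topological_groupoid G X r s u ginv gmult"
    and iso: "compactin G (arrows_between G r s {x} {x})"
    and g: "g \<in> topspace G" "s g = x" "r g = y"
  shows "compactin G (arrows_between G r s {x} {y})"
proof -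
  have "compactin (subtopology G {h \<in> topspace G. r h = s g}) (arrows_between G r s {x} {x})"
    using iso g by (auto simp: compactin_subtopology arrows_between_def)
  then have "compactin G (gmult g ` arrows_between G r s {x} {x})"
    using image_compactin topological_groupoid_continuous_left_translation[OF grpd g(1)] by blast
  then show ?thesis
    by (simp add: topological_groupoid_left_translate_isotropy[OF grpd g])
qed

lemma topological_groupoid_proper_iff_closed_compact_isotropy:
  assumes grpd: "topological_groupoid G X r s u ginv gmult"
  shows "proper_map G (prod_topology X X) (\<lambda>g. (r g, s g)) \<longleftrightarrow>
           closed_map G (prod_topology X X) (\<lambda>g. (r g, s g)) \<and>
           (\<forall>x\<in>topspace X. compactin G (arrows_between G r s {x} {x}))"
    (is "?proper \<longleftrightarrow> ?closed \<and> ?isotropy")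
proof -
  have fibre: "{g \<in> topspace G. (r g, s g) = (y, x)} = arrows_between G r s {x} {y}" for x y
    by (auto simp: arrows_between_def)
  have arrows_compact: "compactin G (arrows_between G r s {x} {y})"
    if ?isotropy "x \<in> topspace X" for x y
  proof (cases "arrows_between G r s {x} {y} = {}")
    case False
    then obtain g where "g \<in> topspace G" "s g = x" "r g = y"
      by (auto simp: arrows_between_def)
    then show ?thesis
      using that topological_groupoid_compactin_arrows_between_if_compactin_isotropy[OF grpd] by blast
  qed simp
  have "compactin G {g \<in> topspace G. (r g, s g) = p}"
    if iso: ?isotropy and p: "p \<in> topspace (prod_topology X X)" for p
  proof -
    obtain y x where "p = (y, x)" "x \<in> topspace X"
      using p by auto
    then show ?thesis
      using arrows_compact[OF iso] by (simp only: fibre)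
  qed
  then have "?closed \<and> ?isotropy \<Longrightarrow> ?proper"
    by (simp add: proper_map_def)
  moreover have "compactin G (arrows_between G r s {x} {x})" if ?proper "x \<in> topspace X" for x
    using that unfolding proper_map_def fibre[symmetric] by simp
  ultimately show ?thesis
    unfolding proper_map_def by blast
qed

theorem proposition2p10:
  fixes G :: "'a topology" and X :: "'b topology"
    and r s :: "'a \<Rightarrow> 'b" and u :: "'b \<Rightarrow> 'a" and ginv :: "'a \<Rightarrow> 'a"
    and gmult :: "'a \<Rightarrow> 'a \<Rightarrow> 'a"
  assumes grpd: "topological_groupoid G X r s u ginv gmult"
    and lc: "loc_compact X"
  defines "P1 \<equiv> proper_map G (prod_topology X X) (\<lambda>g. (r g, s g))"
    and "P2 \<equiv> closed_map G (prod_topology X X) (\<lambda>g. (r g, s g)) \<and>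
               (\<forall>x\<in>topspace X. compactin G (arrows_between G r s {x} {x}))"
    and "P3 \<equiv> (\<forall>K L. K \<subseteq> topspace X \<longrightarrow> L \<subseteq> topspace X \<longrightarrow> compactin X K \<longrightarrow> compactin X L
               \<longrightarrow> compactin G (arrows_between G r s K L))"
    and "P3' \<equiv> (\<forall>K L. K \<subseteq> topspace X \<longrightarrow> L \<subseteq> topspace X \<longrightarrow> compact_sub X K \<longrightarrow> compact_sub X L
               \<longrightarrow> compactin G (arrows_between G r s K L))"
    and "P4 \<equiv> (\<forall>K. K \<subseteq> topspace X \<longrightarrow> compactin X K \<longrightarrow> compactin G (arrows_between G r s K K))"
    and "P5 \<equiv> (\<forall>x\<in>topspace X. \<forall>y\<in>topspace X. \<exists>Kx Ly.
               compact_sub X Kx \<and> nbhd X Kx x \<and> compact_sub X Ly \<and> nbhd X Ly y \<and>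
               compactin G (arrows_between G r s Kx Ly))"
  shows "(P1 \<longleftrightarrow> P2) \<and> (P2 \<longleftrightarrow> P3) \<and> (P3 \<longleftrightarrow> P3') \<and> (P3' \<longleftrightarrow> P5) \<and> (P5 \<longrightarrow> P4) \<and>
         (Hausdorff_space X \<longrightarrow> (P4 \<longrightarrow> P1))"
proof -
  have cont: "continuous_map G X r" "continuous_map G X s"
    using grpd topological_groupoid_continuous_range topological_groupoid_continuous_source
    by blast+
  have "P1 \<longleftrightarrow> P2"
    unfolding P1_def P2_def by (rule topological_groupoid_proper_iff_closed_compact_isotropy[OF grpd])
  moreover have "P1 \<Longrightarrow> P3"
    unfolding P1_def P3_def using proper_map_imp_compactin_arrows_between by blast
  moreover have "P3 \<Longrightarrow> P3'" "P3 \<Longrightarrow> P4"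
    unfolding P3_def P3'_def P4_def compact_sub_def by blast+
  moreover have P5 if P3'
    using that lc unfolding P3'_def P5_def loc_compact_def nbhd_def by meson
  moreover have P1 if P5
    using that unfolding P1_def P5_def compact_sub_def
    by (intro proper_map_if_compact_arrows_between_Hausdorff_neighbourhoods[OF cont]) blast
  moreover have P3 if "Hausdorff_space X" P4
    using that compactin_arrows_between_if_compactin_union_square[OF _ cont] compactin_Un
    unfolding P3_def P4_def by (metis Un_subset_iff)
  ultimately show ?thesis
    by blast
qed

end
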